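(* Let $k,l,m$ be positive integers, $n=(l+1)k$, $A\in\mathbb{R}^{m\times n}$, $x\in\mathbb{R}^n$, $\epsilon\ge0$, $e\in\mathbb{R}^m$ with $\|e\|_2\le\epsilon$, $y=Ax+e$, let $p\in(0,1)$, let $x^{\star}$ be a solution of $\min_{\gamma}\|\gamma\|_p$ subject to $\|y-A\gamma\|_2\le\epsilon$, and let $h=x-x^{\star}$. Let $T_0^c=\{k+1,\dots,n\}$ and let $T_1,\dots,T_l$ be the partition of $T_0^c$ into consecutive blocks of size $k$ after ordering the indices of $T_0^c$ so that $|h_j|$ is non-increasing. Then $$\sum_{i=2}^l\|h_{T_i}\|_2\le\sqrt2\,C_1(p)k^{\frac12-\frac1p}\|h_{T_0^c}\|_p,\qquad C_1(p)=\begin{cases}(\frac p2)^{\frac12}\big(\frac{2}{2-p}\big)^{\frac12-\frac1p}, & p\in(0,p^{\star}],\\ 2^{\frac12-\frac1p}, & p\in(p^{\star},1).\end{cases}$$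
   Context: For $p\in(0,1)$, $\|\gamma\|_p=(\sum_i|\gamma_i|^p)^{1/p}$. For a vector $v$ and index set $T$, $v_T$ is the vector equal to $v$ on $T$ and zero elsewhere. $p^{\star}\approx0.45418$ is the unique solution in $(0,1]$ of $(\frac{p}{2})^{1/2}(2-p)^{\frac1p-\frac12}=1$. *)

theory Defs
  imports Complex_Main
begin

text \<open>Vectors in R^n are functions nat => real, only indices in {0..<n} matter
  (index i here corresponds to index i+1 in the paper). Matrices are nat => nat => real.\<close>

definition lp_norm :: "real \<Rightarrow> nat set \<Rightarrow> (nat \<Rightarrow> real) \<Rightarrow> real" where
  "lp_norm p S v = (\<Sum>i\<in>S. \<bar>v i\<bar> powr p) powr (1 / p)"

definition l2_norm :: "nat set \<Rightarrow> (nat \<Rightarrow> real) \<Rightarrow> real" where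
  "l2_norm S v = sqrt (\<Sum>i\<in>S. (v i)\<^sup>2)"

definition mat_vec :: "nat \<Rightarrow> (nat \<Rightarrow> nat \<Rightarrow> real) \<Rightarrow> (nat \<Rightarrow> real) \<Rightarrow> (nat \<Rightarrow> real)" where
  "mat_vec n A v = (\<lambda>i. \<Sum>j<n. A i j * v j)"

definition p_star :: real where
  "p_star = (THE p. 0 < p \<and> p \<le> 1 \<and> sqrt (p / 2) * (2 - p) powr (1 / p - 1 / 2) = 1)"

definition C1 :: "real \<Rightarrow> real" where
  "C1 p = (if p \<le> p_star then sqrt (p / 2) * (2 / (2 - p)) powr (1 / 2 - 1 / p)
           else 2 powr (1 / 2 - 1 / p))"

end

theory Submission
  imports Defs "HOL-Analysis.Convex"
begin

text \<open>Write a_j = |h_{\<sigma> j}|, a non-increasing sequence, and let b_i be the sum of a_j^p over the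
  i-th block. Every entry of block i is at most every entry of block i - 1, which gives
  \<parallel>h_{T_i}\<parallel>_2 \<le> k^{1/2-1/p} b_{i-1}^{1/p-1/2} b_i^{1/2}. It then suffices to show
  \<Sum>_{i\<ge>2} b_{i-1}^{1/p-1/2} b_i^{1/2} \<le> \<surd>2 C_1(p) (\<Sum>_i b_i)^{1/p} for every non-increasing
  non-negative sequence b. For p \<le> 1/2, Young's inequality bounds each term by a multiple of
  (b_{i-1} + b_i)^{1/p}, and \<Sum>_i (b_{i-1} + b_i)^2 \<le> 7/5 (\<Sum>_i b_i)^2; for p \<ge> 1/2 one
  pulls out b_1^{1/p-1} and estimates \<Sum>_i (b_{i-1} b_i)^{1/2} by AM-GM. Since the function
  defining p_star is strictly decreasing, C_1(p) is the larger of the two constants obtained.\<close>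

definition pstar_log :: "real \<Rightarrow> real" where
  "pstar_log p = ln (p / 2) / 2 + (1 / p - 1 / 2) * ln (2 - p)"

lemma exp_pstar_log:
  assumes "0 < p" "p < 2"
  shows "exp (pstar_log p) = sqrt (p / 2) * (2 - p) powr (1 / p - 1 / 2)"
proof -
  have "sqrt (p / 2) = exp (ln (p / 2) / 2)"
    using assms by (simp add: powr_half_sqrt[symmetric] powr_def)
  moreover have "(2 - p) powr (1 / p - 1 / 2) = exp ((1 / p - 1 / 2) * ln (2 - p))"
    using assms by (simp add: powr_def)
  ultimately show ?thesis
    by (simp add: pstar_log_def exp_add)
qed

lemma pstar_log_eq_0_iff:
  assumes "0 < p" "p < 2"
  shows "pstar_log p = 0 \<longleftrightarrow> sqrt (p / 2) * (2 - p) powr (1 / p - 1 / 2) = 1"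
  using exp_pstar_log[OF assms] by (metis exp_eq_one_iff)

lemma pstar_log_has_real_derivative:
  assumes "0 < x" "x < 2"
  shows "(pstar_log has_real_derivative - ln (2 - x) / x\<^sup>2) (at x)"
proof -
  have "((\<lambda>p. ln (p / 2) / 2 + (1 / p - 1 / 2) * ln (2 - p)) has_real_derivative
      (1 / (x / 2) * (1 / 2)) / 2 + ((- 1 / x\<^sup>2) * ln (2 - x) + (1 / x - 1 / 2) * (1 / (2 - x) * (- 1))))
      (at x)"
    using assms by (auto intro!: derivative_eq_intros simp: power2_eq_square)
  moreover have "(1 / (x / 2) * (1 / 2)) / 2 + ((- 1 / x\<^sup>2) * ln (2 - x) + (1 / x - 1 / 2) * (1 / (2 - x) * (- 1)))
      = - ln (2 - x) / x\<^sup>2"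
    using assms by (simp add: field_simps power2_eq_square)
  ultimately show ?thesis
    unfolding pstar_log_def[abs_def] by simp
qed

lemma isCont_pstar_log: "0 < x \<Longrightarrow> x < 2 \<Longrightarrow> isCont pstar_log x"
  by (rule DERIV_isCont[OF pstar_log_has_real_derivative])

lemma pstar_log_strict_decreasing:
  assumes "0 < a" "a < b" "b \<le> 1"
  shows "pstar_log b < pstar_log a"
proof (rule DERIV_neg_imp_decreasing_open[OF \<open>a < b\<close>])
  fix x assume "a < x" "x < b"
  with assms have "(pstar_log has_real_derivative - ln (2 - x) / x\<^sup>2) (at x)"
    by (intro pstar_log_has_real_derivative) auto
  moreover have "- ln (2 - x) / x\<^sup>2 < 0"
    using assms \<open>a < x\<close> \<open>x < b\<close> by (simp add: divide_pos_pos)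
  ultimately show "\<exists>y. (pstar_log has_real_derivative y) (at x) \<and> y < 0"
    by blast
next
  show "continuous_on {a..b} pstar_log"
    using assms by (intro continuous_at_imp_continuous_on ballI isCont_pstar_log) auto
qed

lemma pstar_log_two_fifths_pos: "pstar_log (2 / 5) > 0"
proof -
  have "sqrt (1 / 5 :: real) > 25 / 64"
    by (rule real_less_rsqrt) (simp add: power2_eq_square)
  then have "exp (pstar_log (2 / 5)) > 1"
    by (subst exp_pstar_log) (simp_all add: powr_numeral power2_eq_square)
  then show ?thesis
    by simp
qed

lemma pstar_log_one_neg: "pstar_log 1 < 0"
  by (simp add: pstar_log_def ln_div)

lemma p_star_root: "0 < p_star" "p_star \<le> 1" "pstar_log p_star = 0"
proof -
  obtain r where r: "2 / 5 \<le> r" "r \<le> 1" "pstar_log r = 0"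
    using IVT2[of pstar_log 1 0 "2 / 5"] pstar_log_two_fifths_pos pstar_log_one_neg
      isCont_pstar_log by force
  have unique: "q = r" if "0 < q" "q \<le> 1" "pstar_log q = 0" for q
    using pstar_log_strict_decreasing[of q r] pstar_log_strict_decreasing[of r q] r that
    by (cases q r rule: linorder_cases) auto
  have "\<exists>!q. 0 < q \<and> q \<le> 1 \<and> sqrt (q / 2) * (2 - q) powr (1 / q - 1 / 2) = 1"
    using r unique pstar_log_eq_0_iff by (intro ex1I[of _ r]) auto
  from theI'[OF this] have "p_star = r"
    using unique pstar_log_eq_0_iff unfolding p_star_def[symmetric] by force
  with r show "0 < p_star" "p_star \<le> 1" "pstar_log p_star = 0"
    by auto
qed

text \<open>The maximum of u^{1/p-1/2} v^{1/2} over u, v \<ge> 0 with u + v = 1.\<close>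

definition young_const :: "real \<Rightarrow> real" where
  "young_const p = sqrt (p / 2) * ((2 - p) / 2) powr (1 / p - 1 / 2)"

lemma powr_half_minus_inverse:
  "x powr (1 / 2 - 1 / p) = inverse (x powr (1 / p - 1 / 2))" for x :: real
proof -
  have "1 / 2 - 1 / p = - (1 / p - 1 / 2)"
    by simp
  then show ?thesis
    by (simp only: powr_minus)
qed

lemma young_const_nonneg: "0 \<le> p \<Longrightarrow> 0 \<le> young_const p"
  by (simp add: young_const_def)

lemma young_const_eq_exp_pstar_log:
  assumes "0 < p" "p < 2"
  shows "young_const p = exp (pstar_log p) * 2 powr (1 / 2 - 1 / p)"
proof -
  have "young_const p = (sqrt (p / 2) * (2 - p) powr (1 / p - 1 / 2)) * inverse (2 powr (1 / p - 1 / 2))"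
    unfolding young_const_def powr_divide by (simp only: divide_inverse mult.assoc)
  then show ?thesis
    by (simp only: exp_pstar_log[OF assms] powr_half_minus_inverse)
qed

lemma C1_first_branch_eq_young_const:
  "sqrt (p / 2) * (2 / (2 - p)) powr (1 / 2 - 1 / p) = young_const p"
  unfolding young_const_def powr_divide powr_half_minus_inverse
  by (simp only: divide_inverse inverse_mult_distrib inverse_inverse_eq mult.commute)

lemma C1_eq_max:
  assumes "0 < p" "p < 1"
  shows "C1 p = max (young_const p) (2 powr (1 / 2 - 1 / p))"
proof (cases "p \<le> p_star")
  case True
  then have "0 \<le> pstar_log p"
    using p_star_root pstar_log_strict_decreasing[of p p_star] assms
    by (cases "p = p_star") auto
  then have "2 powr (1 / 2 - 1 / p) \<le> young_const p"
    using assms by (simp add: young_const_eq_exp_pstar_log)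
  with True show ?thesis
    using assms by (simp add: C1_def C1_first_branch_eq_young_const)
next
  case False
  then have "pstar_log p < 0"
    using p_star_root pstar_log_strict_decreasing[of p_star p] assms by auto
  then have "young_const p \<le> 2 powr (1 / 2 - 1 / p)"
    using assms by (simp add: young_const_eq_exp_pstar_log)
  with False show ?thesis
    by (simp add: C1_def)
qed

lemma powr_mul_sqrt_le_young_const:
  fixes u v p :: real
  assumes "0 < p" "p < 2" "0 \<le> u" "0 \<le> v"
  shows "u powr (1 / p - 1 / 2) * sqrt v \<le> young_const p * (u + v) powr (1 / p)"
proof (cases "u = 0 \<or> v = 0")
  case True
  have "1 / p - 1 / 2 > 0"
    using assms by (simp add: field_simps)
  with True have "u powr (1 / p - 1 / 2) * sqrt v = 0"
    by auto
  moreover have "0 \<le> young_const p * (u + v) powr (1 / p)"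
    using assms by (simp add: young_const_nonneg)
  ultimately show ?thesis
    by linarith
next
  case False
  with assms have u: "u > 0" and v: "v > 0"
    by auto
  define \<alpha> where "\<alpha> = (2 - p) / 2"
  define \<beta> where "\<beta> = p / 2"
  have \<alpha>: "0 < \<alpha>" and \<beta>: "0 < \<beta>"
    using assms by (auto simp: \<alpha>_def \<beta>_def)
  moreover have "\<alpha> + \<beta> = 1"
    unfolding \<alpha>_def \<beta>_def by (simp add: add_divide_distrib[symmetric])
  ultimately have "(u / \<alpha>) powr \<alpha> * (v / \<beta>) powr \<beta> \<le> \<alpha> * (u / \<alpha>) + \<beta> * (v / \<beta>)"
    using u v by (intro Youngs_inequality_0) auto
  then have "((u / \<alpha>) powr \<alpha> * (v / \<beta>) powr \<beta>) powr (1 / p) \<le> (u + v) powr (1 / p)"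
    using \<alpha> \<beta> assms by (intro powr_mono2) auto
  moreover have "\<alpha> * (1 / p) = 1 / p - 1 / 2" "\<beta> * (1 / p) = 1 / 2"
    using assms by (auto simp: \<alpha>_def \<beta>_def field_simps)
  ultimately have young: "(u / \<alpha>) powr (1 / p - 1 / 2) * (v / \<beta>) powr (1 / 2) \<le> (u + v) powr (1 / p)"
    by (simp add: powr_mult powr_powr)
  have "u powr (1 / p - 1 / 2) * sqrt v
      = (\<alpha> powr (1 / p - 1 / 2) * \<beta> powr (1 / 2)) * ((u / \<alpha>) powr (1 / p - 1 / 2) * (v / \<beta>) powr (1 / 2))"
    using \<alpha> \<beta> u v by (simp add: powr_divide powr_half_sqrt field_simps)
  also have "\<dots> \<le> (\<alpha> powr (1 / p - 1 / 2) * \<beta> powr (1 / 2)) * (u + v) powr (1 / p)"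
    using young by (intro mult_left_mono) auto
  also have "\<alpha> powr (1 / p - 1 / 2) * \<beta> powr (1 / 2) = young_const p"
    using assms by (simp add: \<alpha>_def \<beta>_def young_const_def powr_half_sqrt)
  finally show ?thesis .
qed

lemma quadratic_le_seven_fifths:
  fixes x y z :: real
  assumes "0 \<le> y" "y \<le> x" "y \<le> z"
  shows "(x + y)\<^sup>2 + min (2 * y) z * (2 * z - y) \<le> 7 / 5 * (x + z)\<^sup>2"
proof (cases "2 * y \<le> z")
  case True
  then have min: "min (2 * y) z = 2 * y"
    by simp
  define t where "t = z - 2 * y"
  have t: "0 \<le> t" "z = 2 * y + t"
    using True by (auto simp: t_def)
  have "7 / 5 * (x + z)\<^sup>2 - ((x + y)\<^sup>2 + 2 * y * (2 * z - y))
      = 2 / 5 * x * x + 18 / 5 * (y * (x - y)) + 11 / 5 * y * y + t * (8 / 5 * y + 14 / 5 * x) + 7 / 5 * t * t"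
    unfolding t(2) by (simp add: algebra_simps power2_eq_square) (simp add: field_simps)
  moreover have "0 \<le> y * (x - y)" "0 \<le> x * x" "0 \<le> y * y" "0 \<le> t * (8 / 5 * y + 14 / 5 * x)" "0 \<le> t * t"
    using assms t by auto
  ultimately show ?thesis
    unfolding min by linarith
next
  case False
  then have min: "min (2 * y) z = z"
    by simp
  define u where "u = x - y"
  define v where "v = z - y"
  have uv: "0 \<le> u" "0 \<le> v" "v \<le> y" "x = y + u" "z = y + v"
    using assms False by (auto simp: u_def v_def)
  have "7 / 5 * (x + z)\<^sup>2 - ((x + y)\<^sup>2 + z * (2 * z - y))
      = 3 / 5 * y * y + 2 * y * v + 3 / 5 * (v * (y - v)) + 8 / 5 * y * u + 2 / 5 * u * u + 14 / 5 * u * v"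
    unfolding uv(4,5) by (simp add: algebra_simps power2_eq_square) (simp add: field_simps)
  moreover have "0 \<le> y * y" "0 \<le> y * v" "0 \<le> v * (y - v)" "0 \<le> y * u" "0 \<le> u * u" "0 \<le> u * v"
    using assms uv by auto
  ultimately show ?thesis
    unfolding min by linarith
qed

lemma powr_mul_le_two_powr:
  fixes s x q b :: real
  assumes "1 \<le> s" "s \<le> 2" "0 \<le> x" "x \<le> b" "0 \<le> q" "q \<le> b" "2 * x * q \<le> b\<^sup>2"
  shows "x powr (s - 1) * q \<le> 2 powr (1 - s) * b powr s"
proof -
  have "0 \<le> b"
    using assms by linarith
  have rhs: "2 powr (1 - s) * b powr s = (b / 2) powr (s - 1) * b"
    using \<open>0 \<le> b\<close> by (simp add: powr_divide powr_diff field_simps)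
  show ?thesis
  proof (cases "x \<le> b / 2")
    case True
    then have "x powr (s - 1) \<le> (b / 2) powr (s - 1)"
      using assms by (intro powr_mono2) auto
    then show ?thesis
      unfolding rhs using assms by (intro mult_mono) auto
  next
    case False
    then have "b > 0"
      using assms by linarith
    have split: "x powr (s - 1) = (b / 2) powr (s - 1) * (2 * x / b) powr (s - 1)"
      using \<open>b > 0\<close> by (simp add: powr_mult[symmetric])
    have "(2 * x / b) powr (s - 1) \<le> 2 * x / b"
      using False \<open>b > 0\<close> assms powr_mono[of "s - 1" 1 "2 * x / b"] by (simp add: field_simps)
    then have "x powr (s - 1) \<le> (b / 2) powr (s - 1) * (2 * x / b)"
      unfolding split by (rule mult_left_mono) simp
    then have "x powr (s - 1) * q \<le> (b / 2) powr (s - 1) * (2 * x / b) * q"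
      using \<open>0 \<le> q\<close> by (rule mult_right_mono)
    also have "\<dots> = (b / 2) powr (s - 1) * (2 * x * q / b)"
      by simp
    also have "\<dots> \<le> (b / 2) powr (s - 1) * b"
      using assms \<open>b > 0\<close> by (intro mult_left_mono) (simp_all add: field_simps power2_eq_square)
    finally show ?thesis
      unfolding rhs .
  qed
qed

lemma sum_adjacent_pairs_le:
  fixes b :: "nat \<Rightarrow> real"
  assumes nonneg: "\<And>i. 0 \<le> b i" and "2 \<le> L"
  shows "(\<Sum>i\<in>{3..L}. b (i - 1) + b i) \<le> 2 * (\<Sum>i\<in>{2..L}. b i) - b 2"
proof -
  obtain L' where L: "L = Suc L'"
    using \<open>2 \<le> L\<close> by (cases L) auto
  have "(\<Sum>i\<in>{3..L}. b (i - 1)) = (\<Sum>i\<in>{Suc 2..Suc L'}. b (i - 1))"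
    using L by simp
  also have "\<dots> = (\<Sum>i\<in>{2..L'}. b i)"
    by (subst sum.shift_bounds_cl_Suc_ivl) simp
  also have "\<dots> \<le> (\<Sum>i\<in>{2..L}. b i)"
    using nonneg L by (intro sum_mono2) auto
  finally have "(\<Sum>i\<in>{3..L}. b (i - 1)) \<le> (\<Sum>i\<in>{2..L}. b i)" .
  moreover have "(\<Sum>i\<in>{2..L}. b i) = b 2 + (\<Sum>i\<in>{3..L}. b i)"
    using \<open>2 \<le> L\<close> by (subst sum.atLeast_Suc_atMost) auto
  ultimately show ?thesis
    by (simp add: sum.distrib)
qed

lemma sum_sqrt_adjacent_le:
  fixes b :: "nat \<Rightarrow> real"
  assumes nonneg: "\<And>i. 0 \<le> b i" and "2 \<le> L"
  shows "(\<Sum>i\<in>{2..L}. sqrt (b (i - 1) * b i)) \<le> sqrt (b 1 * b 2) + (\<Sum>i\<in>{2..L}. b i) - b 2 / 2"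
proof -
  have "(\<Sum>i\<in>{3..L}. sqrt (b (i - 1) * b i)) \<le> (\<Sum>i\<in>{3..L}. b (i - 1) + b i) / 2"
    unfolding sum_divide_distrib using nonneg arith_geo_mean_sqrt by (intro sum_mono) auto
  also have "\<dots> \<le> (\<Sum>i\<in>{2..L}. b i) - b 2 / 2"
    using sum_adjacent_pairs_le[of b, OF nonneg \<open>2 \<le> L\<close>] by simp
  finally show ?thesis
    using \<open>2 \<le> L\<close> by (subst sum.atLeast_Suc_atMost) auto
qed

lemma sum_adjacent_sq_le:
  fixes b :: "nat \<Rightarrow> real"
  assumes nonneg: "\<And>i. 0 \<le> b i" and anti: "antimono_on {1..L} b"
  shows "(\<Sum>i\<in>{2..L}. (b (i - 1) + b i)\<^sup>2) \<le> 7 / 5 * (\<Sum>i\<in>{1..L}. b i)\<^sup>2"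
proof (cases "2 \<le> L")
  case False
  then show ?thesis
    by simp
next
  case True
  have anti': "b j \<le> b i" if "1 \<le> i" "i \<le> j" "j \<le> L" for i j
    using monotone_onD[OF anti] that by auto
  define z where "z = (\<Sum>i\<in>{2..L}. b i)"
  define M where "M = min (2 * b 2) z"
  have total: "(\<Sum>i\<in>{1..L}. b i) = b 1 + z"
    unfolding z_def using True by (subst sum.atLeast_Suc_atMost) (auto simp: numeral_2_eq_2)
  have "(\<Sum>i\<in>{3..L}. b i) \<ge> 0"
    using nonneg by (simp add: sum_nonneg)
  then have "b 2 \<le> z"
    unfolding z_def using True by (subst sum.atLeast_Suc_atMost) auto
  have pair_le: "b (i - 1) + b i \<le> M" if "i \<in> {3..L}" for i
  proof -
    have "b (i - 1) + b i = (\<Sum>j\<in>{i - 1, i}. b j)"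
      using that by auto
    also have "\<dots> \<le> z"
      unfolding z_def using that nonneg by (intro sum_mono2) auto
    moreover have "b (i - 1) \<le> b 2" "b i \<le> b 2"
      using that by (auto intro: anti')
    ultimately show ?thesis
      unfolding M_def by linarith
  qed
  have "(\<Sum>i\<in>{3..L}. (b (i - 1) + b i)\<^sup>2) \<le> (\<Sum>i\<in>{3..L}. M * (b (i - 1) + b i))"
    unfolding power2_eq_square using pair_le nonneg by (intro sum_mono mult_right_mono) auto
  also have "\<dots> \<le> M * (2 * z - b 2)"
    unfolding sum_distrib_left[symmetric] z_def M_def
    using sum_adjacent_pairs_le[of b, OF nonneg True] nonneg[of 2] \<open>b 2 \<le> z\<close>
    by (intro mult_left_mono) (auto simp: z_def)
  finally have "(\<Sum>i\<in>{2..L}. (b (i - 1) + b i)\<^sup>2) \<le> (b 1 + b 2)\<^sup>2 + M * (2 * z - b 2)"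
    using True by (subst sum.atLeast_Suc_atMost) auto
  also have "\<dots> \<le> 7 / 5 * (b 1 + z)\<^sup>2"
    unfolding M_def using nonneg anti'[of 1 2] True \<open>b 2 \<le> z\<close>
    by (intro quadratic_le_seven_fifths) auto
  finally show ?thesis
    unfolding total .
qed

lemma powr_le_sq_mul_powr:
  fixes c B r :: real
  assumes "0 \<le> c" "c \<le> B" "2 \<le> r"
  shows "c powr r \<le> c\<^sup>2 * B powr (r - 2)"
proof -
  have "c powr r = c\<^sup>2 * c powr (r - 2)"
    using assms powr_add[of c "r - 2" 2] by (simp add: mult.commute)
  also have "\<dots> \<le> c\<^sup>2 * B powr (r - 2)"
    using assms by (intro mult_left_mono powr_mono2) auto
  finally show ?thesis .
qed

lemma powr_minus_two_mul_sq:
  fixes B r :: real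
  assumes "0 \<le> B"
  shows "B powr (r - 2) * B\<^sup>2 = B powr r"
  using assms powr_add[of B "r - 2" 2] by simp

lemma sum_adjacent_powr_sqrt_le_small_p:
  fixes b :: "nat \<Rightarrow> real"
  assumes p: "0 < p" "p \<le> 1 / 2" and nonneg: "\<And>i. 0 \<le> b i" and anti: "antimono_on {1..L} b"
  shows "(\<Sum>i\<in>{2..L}. b (i - 1) powr (1 / p - 1 / 2) * sqrt (b i))
          \<le> 7 / 5 * young_const p * (\<Sum>i\<in>{1..L}. b i) powr (1 / p)"
proof -
  define B where "B = (\<Sum>i\<in>{1..L}. b i)"
  have "0 \<le> B"
    unfolding B_def using nonneg by (simp add: sum_nonneg)
  have pair_le: "b (i - 1) + b i \<le> B" if "i \<in> {2..L}" for i
  proof -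
    have "b (i - 1) + b i = (\<Sum>j\<in>{i - 1, i}. b j)"
      using that by auto
    also have "\<dots> \<le> B"
      unfolding B_def using that nonneg by (intro sum_mono2) auto
    finally show ?thesis .
  qed
  have "2 \<le> 1 / p"
    using p by (simp add: field_simps)
  have "(\<Sum>i\<in>{2..L}. b (i - 1) powr (1 / p - 1 / 2) * sqrt (b i))
      \<le> (\<Sum>i\<in>{2..L}. young_const p * (b (i - 1) + b i) powr (1 / p))"
    using p nonneg by (intro sum_mono powr_mul_sqrt_le_young_const) auto
  also have "\<dots> \<le> (\<Sum>i\<in>{2..L}. young_const p * ((b (i - 1) + b i)\<^sup>2 * B powr (1 / p - 2)))"
    using p nonneg pair_le \<open>2 \<le> 1 / p\<close>
    by (intro sum_mono mult_left_mono young_const_nonneg powr_le_sq_mul_powr) auto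
  also have "\<dots> = young_const p * B powr (1 / p - 2) * (\<Sum>i\<in>{2..L}. (b (i - 1) + b i)\<^sup>2)"
    by (simp add: sum_distrib_left mult_ac)
  also have "\<dots> \<le> young_const p * B powr (1 / p - 2) * (7 / 5 * B\<^sup>2)"
    unfolding B_def using p sum_adjacent_sq_le[of b, OF nonneg anti]
    by (intro mult_left_mono) (auto simp: young_const_nonneg)
  also have "\<dots> = 7 / 5 * young_const p * B powr (1 / p)"
    using powr_minus_two_mul_sq[OF \<open>0 \<le> B\<close>] by (simp add: mult_ac)
  finally show ?thesis
    unfolding B_def .
qed

lemma sum_adjacent_powr_sqrt_le_large_p:
  fixes b :: "nat \<Rightarrow> real"
  assumes s: "1 \<le> s" "s \<le> 2" and nonneg: "\<And>i. 0 \<le> b i" and anti: "antimono_on {1..L} b"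
  shows "(\<Sum>i\<in>{2..L}. b (i - 1) powr (s - 1 / 2) * sqrt (b i))
          \<le> 2 powr (1 - s) * (\<Sum>i\<in>{1..L}. b i) powr s"
proof (cases "2 \<le> L")
  case False
  then show ?thesis
    by simp
next
  case True
  define z where "z = (\<Sum>i\<in>{2..L}. b i)"
  define Q where "Q = (\<Sum>i\<in>{2..L}. sqrt (b (i - 1) * b i))"
  have total: "(\<Sum>i\<in>{1..L}. b i) = b 1 + z"
    unfolding z_def using True by (subst sum.atLeast_Suc_atMost) (auto simp: numeral_2_eq_2)
  have "0 \<le> z" "0 \<le> Q"
    unfolding z_def Q_def using nonneg by (auto intro: sum_nonneg)
  have term_le: "b (i - 1) powr (s - 1 / 2) * sqrt (b i) \<le> b 1 powr (s - 1) * sqrt (b (i - 1) * b i)"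
    if "i \<in> {2..L}" for i
  proof -
    have "1 \<le> i - 1" "i - 1 \<le> L"
      using that by auto
    then have "b (i - 1) \<le> b 1"
      using monotone_onD[OF anti, of 1 "i - 1"] by simp
    have "b (i - 1) powr (s - 1 / 2) * sqrt (b i) = b (i - 1) powr (s - 1) * sqrt (b (i - 1) * b i)"
      using nonneg powr_add[of "b (i - 1)" "s - 1" "1 / 2"]
      by (simp add: powr_half_sqrt real_sqrt_mult)
    also have "\<dots> \<le> b 1 powr (s - 1) * sqrt (b (i - 1) * b i)"
      using s nonneg \<open>b (i - 1) \<le> b 1\<close> by (intro mult_right_mono powr_mono2) auto
    finally show ?thesis .
  qed
  have Q_le: "Q \<le> sqrt (b 1 * b 2) + z - b 2 / 2"
    unfolding Q_def z_def by (rule sum_sqrt_adjacent_le[of b, OF nonneg True])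
  have amgm: "2 * sqrt (b 1 * b 2) \<le> b 1 + b 2"
    using arith_geo_mean_sqrt[OF nonneg[of 1] nonneg[of 2]] by simp
  have "(\<Sum>i\<in>{2..L}. b (i - 1) powr (s - 1 / 2) * sqrt (b i)) \<le> b 1 powr (s - 1) * Q"
    unfolding Q_def sum_distrib_left using term_le by (intro sum_mono) auto
  also have "\<dots> \<le> 2 powr (1 - s) * (b 1 + z) powr s"
  proof (rule powr_mul_le_two_powr)
    show "Q \<le> b 1 + z"
      using Q_le amgm nonneg[of 1] by linarith
    have "2 * b 1 * Q \<le> 2 * b 1 * (sqrt (b 1 * b 2) + z - b 2 / 2)"
      using Q_le nonneg by (intro mult_left_mono) auto
    also have "\<dots> \<le> (b 1 + z)\<^sup>2"
      using mult_left_mono[OF amgm nonneg[of 1]]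
      by (simp add: power2_eq_square algebra_simps add_increasing)
    finally show "2 * b 1 * Q \<le> (b 1 + z)\<^sup>2" .
  qed (use s nonneg \<open>0 \<le> z\<close> \<open>0 \<le> Q\<close> in auto)
  finally show ?thesis
    unfolding total .
qed

lemma sum_adjacent_powr_sqrt_le:
  fixes b :: "nat \<Rightarrow> real"
  assumes p: "0 < p" "p < 1" and nonneg: "\<And>i. 0 \<le> b i" and anti: "antimono_on {1..L} b"
  shows "(\<Sum>i\<in>{2..L}. b (i - 1) powr (1 / p - 1 / 2) * sqrt (b i))
          \<le> sqrt 2 * C1 p * (\<Sum>i\<in>{1..L}. b i) powr (1 / p)"
proof (cases "p \<le> 1 / 2")
  case True
  have "7 / 5 * young_const p \<le> sqrt 2 * C1 p"
  proof (rule mult_mono)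
    show "7 / 5 \<le> sqrt (2 :: real)"
      by (rule real_le_rsqrt) (simp add: power2_eq_square)
  qed (use p young_const_nonneg C1_eq_max in auto)
  then show ?thesis
    using sum_adjacent_powr_sqrt_le_small_p[of p b, OF p(1) True nonneg anti]
    by (meson mult_right_mono order_trans powr_ge_zero)
next
  case False
  have "2 powr (1 - 1 / p) = sqrt 2 * 2 powr (1 / 2 - 1 / p)"
    using powr_add[of 2 "1 / 2" "1 / 2 - 1 / p"] by (simp add: powr_half_sqrt)
  also have "\<dots> \<le> sqrt 2 * C1 p"
    using p C1_eq_max by simp
  finally have "2 powr (1 - 1 / p) \<le> sqrt 2 * C1 p" .
  moreover have "1 \<le> 1 / p" "1 / p \<le> 2"
    using p False by (auto simp: field_simps)
  ultimately show ?thesis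
    using sum_adjacent_powr_sqrt_le_large_p[of "1 / p" b, OF _ _ nonneg anti]
    by (meson mult_right_mono order_trans powr_ge_zero)
qed

lemma sum_powr_le_dominating:
  fixes a :: "'i \<Rightarrow> real"
  assumes "finite S" "card T \<le> card S" "0 \<le> p" "0 \<le> m"
    and above: "\<And>j. j \<in> S \<Longrightarrow> m \<le> a j" and below: "\<And>j. j \<in> T \<Longrightarrow> 0 \<le> a j \<and> a j \<le> m"
  shows "(\<Sum>j\<in>T. a j powr p) \<le> (\<Sum>j\<in>S. a j powr p)"
proof -
  have "(\<Sum>j\<in>T. a j powr p) \<le> (\<Sum>j\<in>T. m powr p)"
    using below assms by (intro sum_mono powr_mono2) auto
  also have "\<dots> \<le> (\<Sum>j\<in>S. m powr p)"
    using assms by simp (simp add: mult_right_mono)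
  also have "\<dots> \<le> (\<Sum>j\<in>S. a j powr p)"
    using above assms by (intro sum_mono powr_mono2) auto
  finally show ?thesis .
qed

lemma sqrt_sum_sq_le_dominating:
  fixes a :: "'i \<Rightarrow> real"
  assumes "finite S" "S \<noteq> {}" "0 < p" "p \<le> 2" "0 \<le> m"
    and above: "\<And>j. j \<in> S \<Longrightarrow> m \<le> a j" and below: "\<And>j. j \<in> T \<Longrightarrow> 0 \<le> a j \<and> a j \<le> m"
  shows "sqrt (\<Sum>j\<in>T. (a j)\<^sup>2)
          \<le> real (card S) powr (1 / 2 - 1 / p) * ((\<Sum>j\<in>S. a j powr p) powr (1 / p - 1 / 2) * sqrt (\<Sum>j\<in>T. a j powr p))"
proof -
  define N where "N = real (card S)"
  have "N > 0"
    using assms by (simp add: N_def card_gt_0_iff)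
  have "N * m powr p \<le> (\<Sum>j\<in>S. a j powr p)"
    unfolding N_def using above assms by (simp add: sum_mono powr_mono2 flip: sum_constant)
  then have "m powr p \<le> (\<Sum>j\<in>S. a j powr p) / N"
    using \<open>N > 0\<close> by (simp add: field_simps)
  have "(\<Sum>j\<in>T. (a j)\<^sup>2) \<le> (\<Sum>j\<in>T. m powr (2 - p) * a j powr p)"
  proof (rule sum_mono)
    fix j assume "j \<in> T"
    then have "(a j)\<^sup>2 = a j powr (2 - p) * a j powr p"
      using below powr_add[of "a j" "2 - p" p] by simp
    also have "\<dots> \<le> m powr (2 - p) * a j powr p"
      using below \<open>j \<in> T\<close> assms by (intro mult_right_mono powr_mono2) auto
    finally show "(a j)\<^sup>2 \<le> m powr (2 - p) * a j powr p" .
  qed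
  then have "sqrt (\<Sum>j\<in>T. (a j)\<^sup>2) \<le> sqrt (m powr (2 - p)) * sqrt (\<Sum>j\<in>T. a j powr p)"
    by (simp add: sum_distrib_left real_sqrt_mult[symmetric])
  also have "\<dots> \<le> N powr (1 / 2 - 1 / p) * (\<Sum>j\<in>S. a j powr p) powr (1 / p - 1 / 2) * sqrt (\<Sum>j\<in>T. a j powr p)"
  proof (rule mult_right_mono)
    have "(2 - p) / 2 = p * (1 / p - 1 / 2)"
      using assms by (simp add: field_simps)
    then have "sqrt (m powr (2 - p)) = (m powr p) powr (1 / p - 1 / 2)"
      using assms by (simp add: powr_half_sqrt_powr[symmetric] powr_powr)
    also have "\<dots> \<le> ((\<Sum>j\<in>S. a j powr p) / N) powr (1 / p - 1 / 2)"
      using \<open>m powr p \<le> _\<close> assms by (intro powr_mono2) (auto simp: field_simps)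
    also have "\<dots> = N powr (1 / 2 - 1 / p) * (\<Sum>j\<in>S. a j powr p) powr (1 / p - 1 / 2)"
      unfolding powr_divide powr_half_minus_inverse by (simp only: divide_inverse mult.commute)
    finally show "sqrt (m powr (2 - p)) \<le> N powr (1 / 2 - 1 / p) * (\<Sum>j\<in>S. a j powr p) powr (1 / p - 1 / 2)" .
  qed (simp add: sum_nonneg)
  finally show ?thesis
    unfolding N_def by (simp only: mult.assoc)
qed

lemma sum_blocks:
  fixes f :: "nat \<Rightarrow> 'a :: comm_monoid_add"
  shows "(\<Sum>j<l * k. f j) = (\<Sum>i\<in>{1..l}. \<Sum>j\<in>{(i - 1) * k..<i * k}. f j)"
proof (induction l)
  case 0
  then show ?case
    by simp
next
  case (Suc l)
  have "(\<Sum>j<Suc l * k. f j) = (\<Sum>j<l * k. f j) + (\<Sum>j\<in>{l * k..<Suc l * k}. f j)"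
    by (simp add: sum.atLeastLessThan_concat lessThan_atLeast0)
  with Suc show ?case
    by simp
qed

lemma sum_sorted_blocks_l2_le:
  fixes a :: "nat \<Rightarrow> real"
  assumes "0 < k" "0 < p" "p < 1"
    and nonneg: "\<And>j. 0 \<le> a j" and sorted: "antimono_on {..<l * k} a"
  shows "(\<Sum>i\<in>{2..l}. sqrt (\<Sum>j\<in>{(i - 1) * k..<i * k}. (a j)\<^sup>2))
          \<le> sqrt 2 * C1 p * real k powr (1 / 2 - 1 / p) * (\<Sum>j<l * k. a j powr p) powr (1 / p)"
proof -
  define J where "J i = {(i - 1) * k..<i * k}" for i
  define b where "b i = (\<Sum>j\<in>J i. a j powr p)" for i
  have card_J: "card (J i) = k" and nonempty_J: "J i \<noteq> {}" if "1 \<le> i" for i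
    using that \<open>0 < k\<close> by (auto simp: J_def diff_mult_distrib)
  have le_last: "a (i * k - 1) \<le> a x" if "x \<in> J i" "i \<le> l" for i x
  proof -
    have "i * k \<le> l * k"
      using that by simp
    moreover have "x < i * k"
      using that by (simp add: J_def)
    ultimately have "x \<le> i * k - 1" "i * k - 1 < l * k" "x < l * k"
      by linarith+
    then show ?thesis
      by (intro monotone_onD[OF sorted]) auto
  qed
  have ge_later: "a y \<le> a (i * k - 1)" if "y \<in> J j" "i < j" "j \<le> l" for i j y
  proof -
    have "i * k \<le> (j - 1) * k" "j * k \<le> l * k"
      using that by (intro mult_le_mono1; linarith)+
    moreover have "(j - 1) * k \<le> y" "y < j * k"
      using that by (auto simp: J_def)
    ultimately have "i * k - 1 \<le> y" "i * k - 1 < l * k" "y < l * k"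
      by linarith+
    then show ?thesis
      by (intro monotone_onD[OF sorted]) auto
  qed
  have b_antimono: "antimono_on {1..l} b"
  proof (rule monotone_onI)
    fix i j assume ij: "i \<in> {1..l}" "j \<in> {1..l}" "i \<le> j"
    show "b j \<le> b i"
    proof (cases "i = j")
      case False
      with ij show ?thesis
        unfolding b_def using card_J nonneg le_last ge_later \<open>0 < p\<close>
        by (intro sum_powr_le_dominating[where m = "a (i * k - 1)"]) (auto simp: J_def)
    qed simp
  qed
  have block: "sqrt (\<Sum>j\<in>J i. (a j)\<^sup>2) \<le> real k powr (1 / 2 - 1 / p) * (b (i - 1) powr (1 / p - 1 / 2) * sqrt (b i))"
    if "i \<in> {2..l}" for i
  proof -
    from that have i: "1 \<le> i - 1" "i - 1 < i" "i \<le> l"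
      by auto
    have "sqrt (\<Sum>j\<in>J i. (a j)\<^sup>2)
        \<le> real (card (J (i - 1))) powr (1 / 2 - 1 / p) * (b (i - 1) powr (1 / p - 1 / 2) * sqrt (b i))"
      unfolding b_def
    proof (rule sqrt_sum_sq_le_dominating[where m = "a ((i - 1) * k - 1)"])
      show "finite (J (i - 1))"
        by (simp add: J_def)
    qed (use i nonempty_J le_last ge_later nonneg \<open>0 < p\<close> \<open>p < 1\<close> in auto)
    with card_J i show ?thesis
      by simp
  qed
  have "(\<Sum>i\<in>{2..l}. sqrt (\<Sum>j\<in>J i. (a j)\<^sup>2))
      \<le> real k powr (1 / 2 - 1 / p) * (\<Sum>i\<in>{2..l}. b (i - 1) powr (1 / p - 1 / 2) * sqrt (b i))"
    unfolding sum_distrib_left using block by (rule sum_mono)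
  also have "\<dots> \<le> real k powr (1 / 2 - 1 / p) * (sqrt 2 * C1 p * (\<Sum>i\<in>{1..l}. b i) powr (1 / p))"
    using sum_adjacent_powr_sqrt_le[of p b l] assms b_antimono
    by (intro mult_left_mono) (auto simp: b_def sum_nonneg)
  also have "(\<Sum>i\<in>{1..l}. b i) = (\<Sum>j<l * k. a j powr p)"
    unfolding b_def J_def by (rule sum_blocks[symmetric])
  finally show ?thesis
    unfolding J_def by (simp add: mult_ac)
qed

theorem lemma12:
  fixes k l m n :: nat and A :: "nat \<Rightarrow> nat \<Rightarrow> real"
    and x e y xs h :: "nat \<Rightarrow> real" and \<epsilon> p :: real
    and \<sigma> :: "nat \<Rightarrow> nat"
  assumes "k > 0" "l > 0" "m > 0"
    and "n = (l + 1) * k"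
    and "\<epsilon> \<ge> 0"
    and "l2_norm {..<m} e \<le> \<epsilon>"
    and "\<forall>i<m. y i = mat_vec n A x i + e i"
    and "0 < p" "p < 1"
    and "l2_norm {..<m} (\<lambda>i. y i - mat_vec n A xs i) \<le> \<epsilon>"
    and "\<forall>\<gamma>. l2_norm {..<m} (\<lambda>i. y i - mat_vec n A \<gamma> i) \<le> \<epsilon>
              \<longrightarrow> lp_norm p {..<n} xs \<le> lp_norm p {..<n} \<gamma>"
    and "h = (\<lambda>i. x i - xs i)"
    and "bij_betw \<sigma> {..<l * k} {k..<n}"
    and "\<forall>i j. i \<le> j \<and> j < l * k \<longrightarrow> \<bar>h (\<sigma> j)\<bar> \<le> \<bar>h (\<sigma> i)\<bar>"
  shows "(\<Sum>i\<in>{2..l}. l2_norm (\<sigma> ` {(i - 1) * k..<i * k}) h)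
           \<le> sqrt 2 * C1 p * real k powr (1 / 2 - 1 / p) * lp_norm p {k..<n} h"
  \<comment> \<open>Only the ordering of h matters.\<close>
proof -
  note bij = assms(13) and sorted = assms(14)
  define a where "a j = \<bar>h (\<sigma> j)\<bar>" for j
  have inj: "inj_on \<sigma> {..<l * k}" and img: "\<sigma> ` {..<l * k} = {k..<n}"
    using bij by (auto simp: bij_betw_def)
  have a_sorted: "antimono_on {..<l * k} a"
    using sorted by (intro monotone_onI) (auto simp: a_def)
  have "(\<Sum>i\<in>{2..l}. sqrt (\<Sum>j\<in>{(i - 1) * k..<i * k}. (a j)\<^sup>2))
      \<le> sqrt 2 * C1 p * real k powr (1 / 2 - 1 / p) * (\<Sum>j<l * k. a j powr p) powr (1 / p)"
    by (rule sum_sorted_blocks_l2_le[OF assms(1,8,9) _ a_sorted]) (simp add: a_def)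
  moreover have "l2_norm (\<sigma> ` {(i - 1) * k..<i * k}) h = sqrt (\<Sum>j\<in>{(i - 1) * k..<i * k}. (a j)\<^sup>2)"
    if "i \<le> l" for i
  proof -
    have "{(i - 1) * k..<i * k} \<subseteq> {..<l * k}"
      using that by (auto intro: less_le_trans)
    then show ?thesis
      using inj_on_subset[OF inj] by (simp add: l2_norm_def a_def sum.reindex)
  qed
  moreover have "lp_norm p {k..<n} h = (\<Sum>j<l * k. a j powr p) powr (1 / p)"
    unfolding lp_norm_def img[symmetric] using inj by (simp add: a_def sum.reindex)
  ultimately show ?thesis
    by simp
qed

end
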